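(* Let $X$ be a linearly ordered set (of arbitrary cardinality) and let $k,n\geq 3$ be odd natural numbers. Then $\mathrm{med}_k\in\langle\{\mathrm{med}_n\}\rangle$. Equivalently, every clone on $X$ contains either no median function or all median functions $\mathrm{med}_m$, $m\ge 3$ odd.
   Context: For a set $X$, $\mathscr O^{(n)}$ denotes the set of all $n$-ary functions $X^n\to X$ and $\mathscr O=\bigcup_{n\ge1}\mathscr O^{(n)}$. A clone on $X$ is a subset of $\mathscr O$ containing all projections and closed under composition. For $\mathscr F\subseteq\mathscr O$, $\langle\mathscr F\rangle$ is the smallest clone containing $\mathscr F$. Let $X$ be linearly ordered by $<$. For $n\ge1$ and $1\le k\le n$, $m^n_k(x_1,\dots,x_n)=x_{j_k}$ where $x_{j_1}\le\dots\le x_{j_n}$ (i.e. $m^n_k$ returns the $k$-th smallest entry). For odd $n$, the $n$-th median function is $\mathrm{med}_n=m^n_{(n+1)/2}$. *)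

theory Defs
  imports Main
begin

text \<open>An n-ary operation on the carrier type 'a is represented as a pair (n, f)
with f :: (nat => 'a) => 'a, where the tuple (x_1,...,x_n) is x 0, ..., x (n-1).\<close>

type_synonym 'a op = "nat \<times> ((nat \<Rightarrow> 'a) \<Rightarrow> 'a)"

definition kth_smallest :: "nat \<Rightarrow> nat \<Rightarrow> (nat \<Rightarrow> 'a::linorder) \<Rightarrow> 'a" where
  "kth_smallest n k x = sort (map x [0..<n]) ! (k - 1)"

definition med :: "nat \<Rightarrow> (nat \<Rightarrow> 'a::linorder) \<Rightarrow> 'a" where
  "med n = kth_smallest n ((n + 1) div 2)"

inductive_set clone_gen :: "'a op set \<Rightarrow> 'a op set" for F :: "'a op set" where
  base: "(n, f) \<in> F \<Longrightarrow> (n, f) \<in> clone_gen F"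
| proj: "i < n \<Longrightarrow> (n, \<lambda>x. x i) \<in> clone_gen F"
| comp: "(m, f) \<in> clone_gen F \<Longrightarrow> (\<forall>j<m. (n, g j) \<in> clone_gen F)
          \<Longrightarrow> (n, \<lambda>x. f (\<lambda>j. g j x)) \<in> clone_gen F"

end

theory Submission
  imports Defs
begin

text \<open>
  A median is determined by its threshold behaviour: \<open>t \<le> med K x\<close> iff more than half of
  \<open>x 0, \<dots>, x (K - 1)\<close> are \<open>\<ge> t\<close>. Identities between medians therefore reduce to counting.

  Feeding \<open>med n\<close>, \<open>n = 2a + 1\<close>, the tuple \<open>(x\<^sub>0, \<dots>, x\<^sub>0, x\<^sub>1, \<dots>, x\<^sub>1, x\<^sub>2)\<close> with \<open>a\<close>
  copies each of \<open>x\<^sub>0\<close> and \<open>x\<^sub>1\<close> gives \<open>med 3\<close>. Conversely \<open>med 3\<close> generates every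
  \<open>med K (x \<circ> \<sigma>)\<close>, by induction on the number of distinct variables \<open>x (\<sigma> i)\<close>. If at most
  two occur, one of them occupies a majority of the positions and the median is that
  projection. If \<open>a, b, c\<close> are three distinct variables, \<open>med K (x \<circ> \<sigma>)\<close> is the \<open>med 3\<close> of
  the three medians obtained by identifying \<open>a\<close> with \<open>b\<close>, \<open>b\<close> with \<open>c\<close> and \<open>c\<close> with \<open>a\<close>,
  each of which has fewer variables: at every threshold two of \<open>x a, x b, x c\<close> lie on the
  same side, so one identification leaves the count unchanged while the other two move
  it in opposite directions.
\<close>

lemma card_less_Suc_conj:
  "card {i. i < Suc n \<and> P i} = card {i. i < n \<and> P i} + of_bool (P n)"
proof (cases "P n")
  case True
  then have "{i. i < Suc n \<and> P i} = insert n {i. i < n \<and> P i}"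
    by (auto simp: less_Suc_eq)
  then show ?thesis
    using True by simp
next
  case False
  then have "{i. i < Suc n \<and> P i} = {i. i < n \<and> P i}"
    by (auto simp: less_Suc_eq)
  then show ?thesis
    using False by simp
qed

lemma subset_pair_if_card_le_2:
  assumes "finite S" "card S \<le> 2"
  obtains v w where "S \<subseteq> {v, w}"
proof -
  have "card S = 0 \<or> card S = 1 \<or> card S = 2"
    using assms(2) by linarith
  then show ?thesis
    using assms(1) that by (auto simp: card_1_singleton_iff card_2_iff)
qed

lemma sorted_le_nth_iff:
  fixes s :: "'a::linorder list"
  assumes "sorted s" "j < length s"
  shows "t \<le> s ! j \<longleftrightarrow> length s - j \<le> card {i. i < length s \<and> t \<le> s ! i}"
proof
  assume "t \<le> s ! j"
  then have "{j..<length s} \<subseteq> {i. i < length s \<and> t \<le> s ! i}"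
    using assms(1) sorted_nth_mono by (fastforce intro: order_trans)
  from card_mono[OF _ this] show "length s - j \<le> card {i. i < length s \<and> t \<le> s ! i}"
    by simp
next
  assume card_ge: "length s - j \<le> card {i. i < length s \<and> t \<le> s ! i}"
  show "t \<le> s ! j"
  proof (rule ccontr)
    assume "\<not> t \<le> s ! j"
    then have "j < i" if "t \<le> s ! i" "i < length s" for i
      using that sorted_nth_mono[OF assms(1), of i j] assms(2) by fastforce
    then have "{i. i < length s \<and> t \<le> s ! i} \<subseteq> {Suc j..<length s}"
      by (auto simp: Suc_le_eq)
    from card_mono[OF _ this] show False
      using card_ge assms(2) by simp
  qed
qed

definition majority :: "nat \<Rightarrow> (nat \<Rightarrow> bool) \<Rightarrow> bool" where
  "majority K P \<longleftrightarrow> K < 2 * card {i. i < K \<and> P i}"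

lemma majority_imp_ex: "majority K P \<Longrightarrow> \<exists>i<K. P i"
  unfolding majority_def by (cases "{i. i < K \<and> P i} = {}") auto

lemma majority_mono:
  assumes "majority K P" "\<And>i. i < K \<Longrightarrow> P i \<Longrightarrow> Q i"
  shows "majority K Q"
proof -
  have "card {i. i < K \<and> P i} \<le> card {i. i < K \<and> Q i}"
    using assms(2) by (intro card_mono) auto
  then show ?thesis
    using assms(1) unfolding majority_def by linarith
qed

lemma majority_Not_iff:
  assumes "odd K"
  shows "majority K (\<lambda>i. \<not> P i) \<longleftrightarrow> \<not> majority K P"
proof -
  have "{i. i < K \<and> \<not> P i} = {..<K} - {i. i < K \<and> P i}"
    by auto
  then have "card {i. i < K \<and> \<not> P i} = K - card {i. i < K \<and> P i}"
    by (simp add: card_Diff_subset subset_eq)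
  moreover have "card {i. i < K \<and> P i} \<le> K"
    using card_mono[of "{..<K}" "{i. i < K \<and> P i}"] by auto
  ultimately show ?thesis
    using assms unfolding majority_def by presburger
qed

lemma majority_3: "majority 3 P \<longleftrightarrow> P 0 \<and> P 1 \<or> P 0 \<and> P 2 \<or> P 1 \<and> P 2"
  unfolding majority_def numeral_3_eq_3 card_less_Suc_conj by (auto simp: numeral_2_eq_2)

lemma majority_comp_fun_upd:
  shows "P a \<longrightarrow> P b \<Longrightarrow> majority K (P \<circ> \<sigma>) \<Longrightarrow> majority K (P(a := P b) \<circ> \<sigma>)"
    and "P b \<longrightarrow> P a \<Longrightarrow> majority K (P(a := P b) \<circ> \<sigma>) \<Longrightarrow> majority K (P \<circ> \<sigma>)"
  by (auto elim!: majority_mono split: if_splits)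

lemma majority_3_fun_upd:
  "majority 3 ((!) [majority K (P(a := P b) \<circ> \<sigma>), majority K (P(b := P c) \<circ> \<sigma>),
                  majority K (P(c := P a) \<circ> \<sigma>)])
   \<longleftrightarrow> majority K (P \<circ> \<sigma>)"
proof -
  define m where "m Q \<longleftrightarrow> majority K (Q \<circ> \<sigma>)" for Q
  have up: "P u \<longrightarrow> P v \<Longrightarrow> m P \<Longrightarrow> m (P(u := P v))"
    and down: "P v \<longrightarrow> P u \<Longrightarrow> m (P(u := P v)) \<Longrightarrow> m P" for u v
    unfolding m_def by (fact majority_comp_fun_upd)+
  have "m (P(a := P b)) \<and> m (P(b := P c)) \<or> m (P(a := P b)) \<and> m (P(c := P a))
      \<or> m (P(b := P c)) \<and> m (P(c := P a)) \<longleftrightarrow> m P"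
    using up[of a b] up[of b c] up[of c a]
      down[where u = a and v = b] down[where u = b and v = c] down[where u = c and v = a]
    by blast
  then show ?thesis
    unfolding majority_3 m_def by simp
qed

definition block_index :: "nat \<Rightarrow> nat \<Rightarrow> nat" where
  "block_index a i = (if i < a then 0 else if i < 2 * a then 1 else 2)"

lemma card_block_index:
  "m \<le> 2 * a + 1 \<Longrightarrow> card {i. i < m \<and> P (block_index a i)}
     = of_bool (P 0) * min m a + of_bool (P 1) * min (m - a) a + of_bool (P 2) * (m - 2 * a)"
  by (induction m) (auto simp: card_less_Suc_conj block_index_def)

lemma majority_block_index:
  assumes "0 < a"
  shows "majority (2 * a + 1) (\<lambda>i. P (block_index a i)) \<longleftrightarrow> majority 3 P"
  using assms unfolding majority_3
  by (simp add: majority_def card_block_index)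

lemma le_med_iff:
  fixes x :: "nat \<Rightarrow> 'a::linorder"
  assumes "odd K"
  shows "t \<le> med K x \<longleftrightarrow> majority K (\<lambda>i. t \<le> x i)"
proof -
  define s where "s = sort (map x [0..<K])"
  obtain a where K: "K = 2 * a + 1"
    using assms oddE by blast
  have "card {i. i < length s \<and> t \<le> s ! i} = length (filter ((\<le>) t) s)"
    by (simp add: length_filter_conv_card)
  also have "\<dots> = length (filter ((\<le>) t) (map x [0..<K]))"
    by (simp add: s_def filter_sort)
  also have "\<dots> = card {i. i < K \<and> t \<le> x i}"
    by (auto simp: length_filter_conv_card intro!: arg_cong[where f = card])
  finally have "t \<le> s ! a \<longleftrightarrow> K - a \<le> card {i. i < K \<and> t \<le> x i}"
    using sorted_le_nth_iff[of s a t] by (simp add: s_def K)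
  moreover have "med K x = s ! a"
    by (simp add: med_def kth_smallest_def s_def K)
  moreover have "K - a \<le> c \<longleftrightarrow> K < 2 * c" for c
    using K by linarith
  ultimately show ?thesis
    unfolding majority_def by simp
qed

lemma med_eqI:
  fixes x y :: "nat \<Rightarrow> 'a::linorder"
  assumes "odd K" "odd L"
    and "\<And>t. majority K (\<lambda>i. t \<le> x i) \<longleftrightarrow> majority L (\<lambda>i. t \<le> y i)"
  shows "med K x = med L y"
  using assms le_med_iff[OF assms(1)] le_med_iff[OF assms(2)] by (metis order_antisym order_refl)

lemma med_block_index:
  fixes x :: "nat \<Rightarrow> 'a::linorder"
  assumes "0 < a"
  shows "med (2 * a + 1) (x \<circ> block_index a) = med 3 x"
proof (rule med_eqI)
  fix t
  show "majority (2 * a + 1) (\<lambda>i. t \<le> (x \<circ> block_index a) i) \<longleftrightarrow> majority 3 (\<lambda>i. t \<le> x i)"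
    using majority_block_index[OF assms, of "\<lambda>j. t \<le> x j"] by simp
qed simp_all

lemma med_comp_eq_majority_value:
  fixes x :: "nat \<Rightarrow> 'a::linorder"
  assumes "odd K" "majority K (\<lambda>i. \<sigma> i = v)"
  shows "med K (x \<circ> \<sigma>) = x v"
proof (rule order_antisym)
  show "x v \<le> med K (x \<circ> \<sigma>)"
    using assms by (auto simp: le_med_iff elim!: majority_mono)
  show "med K (x \<circ> \<sigma>) \<le> x v"
  proof (rule ccontr)
    let ?m = "med K (x \<circ> \<sigma>)"
    assume "\<not> ?m \<le> x v"
    moreover have "majority K (\<lambda>i. ?m \<le> x (\<sigma> i))"
      using le_med_iff[OF assms(1), of ?m "x \<circ> \<sigma>"] by simp
    ultimately have "majority K (\<lambda>i. \<sigma> i \<noteq> v)"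
      by (auto elim!: majority_mono)
    then show False
      using assms majority_Not_iff by blast
  qed
qed

lemma med_comp_two_valued:
  assumes "odd K" "\<sigma> ` {..<K} \<subseteq> {v, w}"
  shows "\<exists>u \<in> \<sigma> ` {..<K}. \<forall>x::nat \<Rightarrow> 'a::linorder. med K (x \<circ> \<sigma>) = x u"
proof -
  have "majority K (\<lambda>i. \<sigma> i = w) \<or> majority K (\<lambda>i. \<sigma> i = v)"
  proof (rule disjCI)
    assume "\<not> majority K (\<lambda>i. \<sigma> i = v)"
    then have "majority K (\<lambda>i. \<sigma> i \<noteq> v)"
      using majority_Not_iff[OF assms(1)] by simp
    then show "majority K (\<lambda>i. \<sigma> i = w)"
      by (rule majority_mono) (use assms(2) in auto)
  qed
  then obtain u where u: "majority K (\<lambda>i. \<sigma> i = u)"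
    by blast
  then have "u \<in> \<sigma> ` {..<K}"
    using majority_imp_ex by fastforce
  with u show ?thesis
    using med_comp_eq_majority_value[OF assms(1)] by blast
qed

lemma med_comp_eq_med3_fun_upd:
  fixes x :: "nat \<Rightarrow> 'a::linorder"
  assumes "odd K"
  shows "med K (x \<circ> \<sigma>) = med 3 ((!) [med K (x(a := x b) \<circ> \<sigma>), med K (x(b := x c) \<circ> \<sigma>),
                                    med K (x(c := x a) \<circ> \<sigma>)])"
proof (rule med_eqI[OF assms])
  fix t
  let ?P = "\<lambda>j. t \<le> x j"
  have "(\<lambda>i. t \<le> (x(u := x v) \<circ> \<sigma>) i) = ?P(u := ?P v) \<circ> \<sigma>" for u v
    by auto
  then show "majority K (\<lambda>i. t \<le> (x \<circ> \<sigma>) i) \<longleftrightarrow> majority 3 (\<lambda>j. t \<le> [med K (x(a := x b) \<circ> \<sigma>),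
    med K (x(b := x c) \<circ> \<sigma>), med K (x(c := x a) \<circ> \<sigma>)] ! j)"
    using majority_3_fun_upd[where P = ?P]
    by (simp add: majority_3 le_med_iff[OF assms] comp_def)
qed simp

lemma clone_gen_comp3:
  assumes "(3, f) \<in> clone_gen F"
    and "(r, g0) \<in> clone_gen F" "(r, g1) \<in> clone_gen F" "(r, g2) \<in> clone_gen F"
  shows "(r, \<lambda>x. f ((!) [g0 x, g1 x, g2 x])) \<in> clone_gen F"
proof -
  have "\<forall>j<3. (r, \<lambda>x. [g0 x, g1 x, g2 x] ! j) \<in> clone_gen F"
    using assms(2-4) by (auto simp: numeral_3_eq_3 less_Suc_eq)
  from clone_gen.comp[OF assms(1) this] show ?thesis
    by simp
qed

lemma med3_in_clone_gen_med:
  assumes "odd n" "3 \<le> n"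
  shows "(3, med 3) \<in> clone_gen {(n, med n :: (nat \<Rightarrow> 'a::linorder) \<Rightarrow> 'a)}"
proof -
  obtain a where n: "n = 2 * a + 1"
    using assms(1) by (blast elim: oddE)
  with assms(2) have "0 < a"
    by simp
  have "\<forall>j<n. (3, \<lambda>x. x (block_index a j)) \<in> clone_gen {(n, med n :: (nat \<Rightarrow> 'a) \<Rightarrow> 'a)}"
    by (auto simp: block_index_def intro: clone_gen.proj)
  from clone_gen.comp[OF clone_gen.base[OF singletonI] this]
  have "(3, \<lambda>x. med n (x \<circ> block_index a)) \<in> clone_gen {(n, med n :: (nat \<Rightarrow> 'a) \<Rightarrow> 'a)}"
    by (simp add: comp_def)
  moreover have "(\<lambda>x. med n (x \<circ> block_index a)) = (med 3 :: (nat \<Rightarrow> 'a) \<Rightarrow> 'a)"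
    unfolding n by (intro ext, rule med_block_index[OF \<open>0 < a\<close>])
  ultimately show ?thesis
    by simp
qed

lemma med_comp_in_clone_gen:
  fixes F :: "'a::linorder op set"
  assumes "odd K" "(3, med 3) \<in> clone_gen F" "\<sigma> ` {..<K} \<subseteq> {..<r}"
  shows "(r, \<lambda>x. med K (x \<circ> \<sigma>)) \<in> clone_gen F"
  using assms(3)
proof (induction "card (\<sigma> ` {..<K})" arbitrary: \<sigma> rule: less_induct)
  case less
  show ?case
  proof (cases "card (\<sigma> ` {..<K}) \<le> 2")
    case True
    obtain v w where "\<sigma> ` {..<K} \<subseteq> {v, w}"
      by (rule subset_pair_if_card_le_2[OF finite_imageI[OF finite_lessThan] True])
    from med_comp_two_valued[OF assms(1) this]
    obtain u where "u \<in> \<sigma> ` {..<K}" and "\<forall>x::nat \<Rightarrow> 'a. med K (x \<circ> \<sigma>) = x u"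
      by (elim bexE)
    moreover have "(r, \<lambda>x::nat \<Rightarrow> 'a. x u) \<in> clone_gen F"
      using \<open>u \<in> \<sigma> ` {..<K}\<close> less.prems by (auto intro: clone_gen.proj)
    ultimately show ?thesis
      by simp
  next
    case False
    then obtain T where T: "T \<subseteq> \<sigma> ` {..<K}" "card T = 3"
      using obtain_subset_with_card_n[of 3 "\<sigma> ` {..<K}"] by force
    then obtain a b c where "T = {a, b, c}" "a \<noteq> b" "b \<noteq> c" "c \<noteq> a"
      unfolding card_3_iff by blast
    with T(1) have abc: "a \<in> \<sigma> ` {..<K}" "b \<in> \<sigma> ` {..<K}" "c \<in> \<sigma> ` {..<K}"
      by auto
    have identify: "(r, \<lambda>x. med K (x(u := x v) \<circ> \<sigma>)) \<in> clone_gen F"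
      if "u \<in> \<sigma> ` {..<K}" "v \<in> \<sigma> ` {..<K}" "u \<noteq> v" for u v
    proof -
      have "(id(u := v) \<circ> \<sigma>) ` {..<K} \<subset> \<sigma> ` {..<K}"
        using that by auto
      then have "card ((id(u := v) \<circ> \<sigma>) ` {..<K}) < card (\<sigma> ` {..<K})"
        by (simp add: psubset_card_mono)
      moreover have "(id(u := v) \<circ> \<sigma>) ` {..<K} \<subseteq> {..<r}"
        using that(2) less.prems by auto
      ultimately have "(r, \<lambda>x. med K (x \<circ> (id(u := v) \<circ> \<sigma>))) \<in> clone_gen F"
        using less.hyps by blast
      moreover have "x \<circ> (id(u := v) \<circ> \<sigma>) = x(u := x v) \<circ> \<sigma>" for x :: "nat \<Rightarrow> 'a"
        by (auto simp: fun_eq_iff)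
      ultimately show ?thesis
        by simp
    qed
    have "(r, \<lambda>x. med 3 ((!) [med K (x(a := x b) \<circ> \<sigma>), med K (x(b := x c) \<circ> \<sigma>),
                              med K (x(c := x a) \<circ> \<sigma>)])) \<in> clone_gen F"
      using abc \<open>a \<noteq> b\<close> \<open>b \<noteq> c\<close> \<open>c \<noteq> a\<close> by (intro clone_gen_comp3[OF assms(2)] identify)
    then show ?thesis
      by (simp only: med_comp_eq_med3_fun_upd[OF assms(1), symmetric])
  qed
qed

theorem mainTheorem1:
  fixes k n :: nat
  assumes "odd k" "k \<ge> 3" "odd n" "n \<ge> 3"
  shows "\<exists>g. (k, g) \<in> clone_gen {(n, med n :: (nat \<Rightarrow> 'a::linorder) \<Rightarrow> 'a)}
              \<and> (\<forall>x. g x = med k x)"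
proof -
  have "(k, \<lambda>x. med k (x \<circ> id)) \<in> clone_gen {(n, med n :: (nat \<Rightarrow> 'a) \<Rightarrow> 'a)}"
    using med_comp_in_clone_gen[OF assms(1) med3_in_clone_gen_med[OF assms(3,4)], of id k] by simp
  then show ?thesis
    by auto
qed

end
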